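(* Let $k\geq 2$ be an integer and let $A=[\bm{a}_1,\dots,\bm{a}_n]\in\mathbb{R}^{m\times n}$ have columns with $\|\bm{a}_i\|_2=1$ for all $i$, and suppose its mutual coherence $\mu=\max_{1\leq i<j\leq n}|\langle \bm{a}_i,\bm{a}_j\rangle|$ satisfies $$\mu<\frac{1}{k-1}.$$ Then for every vector $\bm{h}\in\mathbb{R}^n$ and every subset $E\subset\{1,\dots,n\}$ with $|E|=k$, $$\|\bm{h}_E\|_2\leq \alpha_1\|A\bm{h}\|_2+\alpha_2\|\bm{h}_{E^c}\|_1,$$ where $$\alpha_1=\frac{\sqrt{1+(k-1)\mu}}{1-(k-1)\mu},\qquad \alpha_2=\frac{\sqrt{k}\,\mu}{1-(k-1)\mu}.$$
   Context: For $E\subset\{1,\dots,n\}$, $E^c=\{1,\dots,n\}\setminus E$, and for a vector $\bm{h}\in\mathbb{R}^n$, $\bm{h}_E$ denotes the vector with $(\bm{h}_E)_i=\bm{h}_i$ for $i\in E$ and $(\bm{h}_E)_i=0$ otherwise. *)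

theory Defs
  imports "HOL-Analysis.Analysis"
begin

text \<open>The 0 is included only so that Max is well defined when there is a single column
  (all inner products are nonnegative in absolute value, so it does not change the value otherwise).\<close>
definition mutual_coherence :: "real^'n^'m \<Rightarrow> real" where
  "mutual_coherence A = Max ({0} \<union> {\<bar>column i A \<bullet> column j A\<bar> | i j. i \<noteq> j})"

definition restrict_vec :: "real^'n \<Rightarrow> 'n set \<Rightarrow> real^'n" where
  "restrict_vec h E = (\<chi> i. if i \<in> E then h $ i else 0)"

definition l1norm :: "real^'n \<Rightarrow> real" where
  "l1norm h = (\<Sum>i\<in>UNIV. \<bar>h $ i\<bar>)"

end

theory Submission
  imports Defs
begin

text \<open>Split \<open>h = u + v\<close> with \<open>u = h_E\<close> and \<open>v = h_{E^c}\<close>. The Gram matrix of \<open>A\<close> has unit diagonal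
  and off-diagonal entries bounded by \<open>\<mu>\<close>, so the \<open>k\<close>-sparse \<open>u\<close> satisfies
  \<open>(1 - (k-1)\<mu>) \<parallel>u\<parallel>\<^sup>2 \<le> \<parallel>Au\<parallel>\<^sup>2 \<le> (1 + (k-1)\<mu>) \<parallel>u\<parallel>\<^sup>2\<close>, while the disjoint supports of \<open>u\<close>
  and \<open>v\<close> give \<open>|\<langle>Au, Av\<rangle>| \<le> \<mu> \<parallel>u\<parallel>\<^sub>1 \<parallel>v\<parallel>\<^sub>1 \<le> \<mu> \<surd>k \<parallel>u\<parallel> \<parallel>v\<parallel>\<^sub>1\<close>. Expanding
  \<open>\<parallel>Au\<parallel>\<^sup>2 = \<langle>Au, Ah\<rangle> - \<langle>Au, Av\<rangle>\<close> and applying Cauchy-Schwarz to the first term yields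
  \<open>(1 - (k-1)\<mu>) \<parallel>u\<parallel>\<^sup>2 \<le> \<parallel>u\<parallel> (\<surd>(1 + (k-1)\<mu>) \<parallel>Ah\<parallel> + \<surd>k \<mu> \<parallel>v\<parallel>\<^sub>1)\<close>; divide by \<open>\<parallel>u\<parallel>\<close>.\<close>

lemma inner_mult_vec_eq_Gram_sum:
  fixes A :: "real^'n^'m"
  shows "(A *v x) \<bullet> (A *v y) = (\<Sum>i\<in>UNIV. \<Sum>j\<in>UNIV. x$i * y$j * (column i A \<bullet> column j A))"
  unfolding matrix_mult_sum
  by (simp add: inner_sum_left inner_sum_right scalar_mult_eq_scaleR sum_distrib_left,
      subst sum.swap, simp add: mult_ac)

lemma sum_sum_eq_diag_plus_off_diag:
  fixes f :: "'a::finite \<Rightarrow> 'a \<Rightarrow> 'b::comm_monoid_add"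
  shows "(\<Sum>i\<in>UNIV. \<Sum>j\<in>UNIV. f i j) = (\<Sum>i\<in>UNIV. f i i) + (\<Sum>i\<in>UNIV. \<Sum>j\<in>UNIV. if i = j then 0 else f i j)"
proof -
  have "(\<Sum>j\<in>UNIV. f i j) = f i i + (\<Sum>j\<in>UNIV. if i = j then 0 else f i j)" for i
    by (simp add: sum.remove[of UNIV i] sum.If_cases Compl_eq_Diff_UNIV)
  then show ?thesis by (simp add: sum.distrib)
qed

lemma abs_double_sum_le:
  fixes g :: "'a \<Rightarrow> 'b \<Rightarrow> real"
  shows "\<bar>\<Sum>i\<in>I. \<Sum>j\<in>J. g i j\<bar> \<le> (\<Sum>i\<in>I. \<Sum>j\<in>J. \<bar>g i j\<bar>)"
  by (rule order_trans[OF sum_abs sum_mono[OF sum_abs]])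

lemma finite_mutual_coherence_set:
  fixes A :: "real^'n^'m"
  shows "finite ({0} \<union> {\<bar>column i A \<bullet> column j A\<bar> | i j. i \<noteq> j})"
proof -
  have "{\<bar>column i A \<bullet> column j A\<bar> | i j. i \<noteq> j} \<subseteq> (\<lambda>(i, j). \<bar>column i A \<bullet> column j A\<bar>) ` UNIV"
    by auto
  then show ?thesis
    using finite_subset[OF _ finite_imageI[OF finite]] by auto
qed

lemma mutual_coherence_nonneg: "mutual_coherence A \<ge> 0"
  unfolding mutual_coherence_def using finite_mutual_coherence_set by (intro Max_ge) auto

lemma abs_inner_column_le_mutual_coherence:
  "i \<noteq> j \<Longrightarrow> \<bar>column i A \<bullet> column j A\<bar> \<le> mutual_coherence A"
  unfolding mutual_coherence_def using finite_mutual_coherence_set by (intro Max_ge) auto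

text \<open>With \<open>y = x\<close> this controls \<open>\<parallel>Ax\<parallel>\<^sup>2 - \<parallel>x\<parallel>\<^sup>2\<close>; for disjointly supported \<open>x, y\<close> both
  diagonal sums vanish and it bounds the cross term.\<close>

lemma abs_inner_mult_vec_off_diag_le:
  fixes A :: "real^'n^'m"
  shows "\<bar>(A *v x) \<bullet> (A *v y) - (\<Sum>i\<in>UNIV. x$i * y$i * (column i A \<bullet> column i A))\<bar>
           \<le> mutual_coherence A * (l1norm x * l1norm y - (\<Sum>i\<in>UNIV. \<bar>x$i\<bar> * \<bar>y$i\<bar>))"
proof -
  let ?G = "\<lambda>i j. column i A \<bullet> column j A"
  have "(A *v x) \<bullet> (A *v y) - (\<Sum>i\<in>UNIV. x$i * y$i * ?G i i)
      = (\<Sum>i\<in>UNIV. \<Sum>j\<in>UNIV. if i = j then 0 else x$i * y$j * ?G i j)"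
    unfolding inner_mult_vec_eq_Gram_sum sum_sum_eq_diag_plus_off_diag[of "\<lambda>i j. x$i * y$j * ?G i j"]
    by simp
  moreover have "l1norm x * l1norm y - (\<Sum>i\<in>UNIV. \<bar>x$i\<bar> * \<bar>y$i\<bar>)
      = (\<Sum>i\<in>UNIV. \<Sum>j\<in>UNIV. if i = j then 0 else \<bar>x$i\<bar> * \<bar>y$j\<bar>)"
    unfolding l1norm_def sum_product sum_sum_eq_diag_plus_off_diag[of "\<lambda>i j. \<bar>x$i\<bar> * \<bar>y$j\<bar>"]
    by simp
  moreover have "\<bar>if i = j then 0 else x$i * y$j * ?G i j\<bar>
      \<le> mutual_coherence A * (if i = j then 0 else \<bar>x$i\<bar> * \<bar>y$j\<bar>)" for i j
    using abs_inner_column_le_mutual_coherence[of i j A]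
    by (simp add: abs_mult mult_left_mono mult.commute[of "mutual_coherence A"])
  ultimately show ?thesis
    by (auto simp: sum_distrib_left intro!: order_trans[OF abs_double_sum_le] sum_mono)
qed

lemma power2_norm_vec_eq_sum: "(norm x)\<^sup>2 = (\<Sum>i\<in>UNIV. (x $ i)\<^sup>2)"
  for x :: "real^'n"
  unfolding power2_norm_eq_inner inner_vec_def by (simp add: power2_eq_square)

lemma l1norm_nonneg: "l1norm x \<ge> 0"
  unfolding l1norm_def by (simp add: sum_nonneg)

lemma power2_l1norm_le_card_mult_power2_norm:
  assumes supp: "\<And>i. i \<notin> S \<Longrightarrow> x $ i = 0"
  shows "(l1norm x)\<^sup>2 \<le> real (card S) * (norm x)\<^sup>2"
proof -
  have "l1norm x = (\<Sum>i\<in>S. \<bar>x $ i\<bar>)"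
    unfolding l1norm_def using supp by (intro sum.mono_neutral_right) auto
  moreover have "(norm x)\<^sup>2 = (\<Sum>i\<in>S. (x $ i)\<^sup>2)"
    unfolding power2_norm_vec_eq_sum using supp by (intro sum.mono_neutral_right) auto
  ultimately show ?thesis
    using sum_squared_le_sum_of_squares[of "\<lambda>i. \<bar>x $ i\<bar>" S] by (simp add: mult.commute)
qed

lemma l1norm_le_sqrt_card_mult_norm:
  assumes "\<And>i. i \<notin> S \<Longrightarrow> x $ i = 0"
  shows "l1norm x \<le> sqrt (real (card S)) * norm x"
  using real_sqrt_le_mono[OF power2_l1norm_le_card_mult_power2_norm[OF assms]]
  by (simp add: real_sqrt_mult l1norm_nonneg)

lemma power2_norm_mult_vec_sparse_bounds:
  fixes A :: "real^'n^'m"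
  assumes cols: "\<forall>i. norm (column i A) = 1"
    and supp: "\<And>i. i \<notin> S \<Longrightarrow> x $ i = 0"
  shows "(1 - (real (card S) - 1) * mutual_coherence A) * (norm x)\<^sup>2 \<le> (norm (A *v x))\<^sup>2"
    and "(norm (A *v x))\<^sup>2 \<le> (1 + (real (card S) - 1) * mutual_coherence A) * (norm x)\<^sup>2"
proof -
  let ?\<mu> = "mutual_coherence A"
  have "(\<Sum>i\<in>UNIV. x$i * x$i * (column i A \<bullet> column i A)) = (norm x)\<^sup>2"
    unfolding power2_norm_vec_eq_sum using cols by (simp add: dot_square_norm power2_eq_square)
  moreover have "(\<Sum>i\<in>UNIV. \<bar>x$i\<bar> * \<bar>x$i\<bar>) = (norm x)\<^sup>2"
    unfolding power2_norm_vec_eq_sum by (simp add: power2_eq_square)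
  ultimately have "\<bar>(norm (A *v x))\<^sup>2 - (norm x)\<^sup>2\<bar> \<le> ?\<mu> * ((l1norm x)\<^sup>2 - (norm x)\<^sup>2)"
    using abs_inner_mult_vec_off_diag_le[of A x x] by (simp add: dot_square_norm power2_eq_square)
  also have "\<dots> \<le> ?\<mu> * ((real (card S) - 1) * (norm x)\<^sup>2)"
    using power2_l1norm_le_card_mult_power2_norm[OF supp] mutual_coherence_nonneg
    by (intro mult_left_mono) (auto simp: algebra_simps)
  finally show "(1 - (real (card S) - 1) * ?\<mu>) * (norm x)\<^sup>2 \<le> (norm (A *v x))\<^sup>2"
    and "(norm (A *v x))\<^sup>2 \<le> (1 + (real (card S) - 1) * ?\<mu>) * (norm x)\<^sup>2"
    by (simp_all add: algebra_simps)
qed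

lemma abs_inner_mult_vec_disjoint_support_le:
  fixes A :: "real^'n^'m"
  assumes "\<And>i. x $ i * y $ i = 0"
  shows "\<bar>(A *v x) \<bullet> (A *v y)\<bar> \<le> mutual_coherence A * l1norm x * l1norm y"
  using abs_inner_mult_vec_off_diag_le[of A x y] assms by (simp add: abs_mult[symmetric] mult.assoc)

lemma norm_mult_vec_sparse_le:
  fixes A :: "real^'n^'m"
  assumes "\<forall>i. norm (column i A) = 1"
    and "\<And>i. i \<notin> S \<Longrightarrow> x $ i = 0"
  shows "norm (A *v x) \<le> sqrt (1 + (real (card S) - 1) * mutual_coherence A) * norm x"
  using real_sqrt_le_mono[OF power2_norm_mult_vec_sparse_bounds(2)[OF assms]]
  by (simp add: real_sqrt_mult)

lemma coherence_quadratic_estimate: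
  fixes A :: "real^'n^'m"
  assumes cols: "\<forall>i. norm (column i A) = 1"
    and supp: "\<And>i. i \<notin> S \<Longrightarrow> x $ i = 0"
    and disj: "\<And>i. x $ i * y $ i = 0"
  shows "(1 - (real (card S) - 1) * mutual_coherence A) * (norm x)\<^sup>2
           \<le> norm x * (sqrt (1 + (real (card S) - 1) * mutual_coherence A) * norm (A *v (x + y))
                       + sqrt (real (card S)) * mutual_coherence A * l1norm y)"
proof -
  let ?\<mu> = "mutual_coherence A"
  have "(1 - (real (card S) - 1) * ?\<mu>) * (norm x)\<^sup>2 \<le> (norm (A *v x))\<^sup>2"
    by (rule power2_norm_mult_vec_sparse_bounds(1)[OF cols supp])
  also have "\<dots> = (A *v x) \<bullet> (A *v (x + y)) - (A *v x) \<bullet> (A *v y)"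
    by (simp add: matrix_vector_right_distrib inner_add_right dot_square_norm)
  also have "\<dots> \<le> norm (A *v x) * norm (A *v (x + y)) + ?\<mu> * l1norm x * l1norm y"
    using norm_cauchy_schwarz[of "A *v x" "A *v (x + y)"]
      abs_inner_mult_vec_disjoint_support_le[of x y A, OF disj] by linarith
  also have "\<dots> \<le> sqrt (1 + (real (card S) - 1) * ?\<mu>) * norm x * norm (A *v (x + y))
                  + ?\<mu> * (sqrt (real (card S)) * norm x) * l1norm y"
    using norm_mult_vec_sparse_le[OF cols supp] l1norm_le_sqrt_card_mult_norm[OF supp]
      mutual_coherence_nonneg l1norm_nonneg
    by (intro add_mono mult_right_mono mult_left_mono) auto
  finally show ?thesis
    by (simp add: algebra_simps)
qed

lemma restrict_vec_nth [simp]: "restrict_vec h E $ i = (if i \<in> E then h $ i else 0)"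
  by (simp add: restrict_vec_def)

lemma restrict_vec_add_Compl: "restrict_vec h E + restrict_vec h (- E) = h"
  by (simp add: vec_eq_iff)

theorem lemma3:
  fixes A :: "real^'n^'m" and k :: nat
  assumes "k \<ge> 2"
    and "\<forall>i. norm (column i A) = 1"
    and "mutual_coherence A < 1 / (real k - 1)"
  shows "\<forall>(h::real^'n) E. card E = k \<longrightarrow>
           norm (restrict_vec h E) \<le>
             sqrt (1 + (real k - 1) * mutual_coherence A) / (1 - (real k - 1) * mutual_coherence A) * norm (A *v h)
           + sqrt (real k) * mutual_coherence A / (1 - (real k - 1) * mutual_coherence A) * l1norm (restrict_vec h (- E))"
proof (intro allI impI)
  fix h :: "real^'n" and E :: "'n set"
  assume card_E: "card E = k"
  let ?\<mu> = "mutual_coherence A"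
  define c where "c = 1 - (real k - 1) * ?\<mu>"
  define N where "N = norm (restrict_vec h E)"
  define R where "R = sqrt (1 + (real k - 1) * ?\<mu>) * norm (A *v h)
                      + sqrt (real k) * ?\<mu> * l1norm (restrict_vec h (- E))"
  have "0 < c"
    using assms(1,3) by (simp add: c_def field_simps)
  have "c * N\<^sup>2 \<le> N * R"
    using coherence_quadratic_estimate[OF assms(2), of E "restrict_vec h E" "restrict_vec h (- E)"]
    by (simp add: card_E restrict_vec_add_Compl c_def N_def R_def)
  moreover have "0 \<le> R"
    using assms(1) mutual_coherence_nonneg[of A] l1norm_nonneg[of "restrict_vec h (- E)"]
    unfolding R_def by (intro add_nonneg_nonneg mult_nonneg_nonneg) auto
  ultimately have "N \<le> R / c"
    using \<open>0 < c\<close> by (cases "N = 0") (auto simp: field_simps power2_eq_square N_def)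
  then show "norm (restrict_vec h E) \<le> sqrt (1 + (real k - 1) * ?\<mu>) / c * norm (A *v h)
           + sqrt (real k) * ?\<mu> / c * l1norm (restrict_vec h (- E))"
    by (simp add: N_def R_def add_divide_distrib)
qed

end
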